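(* Let $\|\cdot\|_1,\|\cdot\|_2$ be two ri norms whose fundamental functions $\phi_1,\phi_2$ are concave maps $[0,1]\to[0,1]$ with $\phi_i(0)=0$, $\phi_i(1)=1$, continuous at $0$. If the right derivatives $\phi_1'(0)$ and $\phi_2'(0)$ are finite, then the two norms are equivalent. In particular, every such norm is equivalent to the $\mathcal{L}^1$ norm $\|X\|_{\mathcal{L}^1}=\int_0^1|X|\,d\mu$.
   Context: $\Omega=[0,1]$ with Lebesgue measure $\mu$. An ri norm is $X\mapsto R(|X|)$, defined on $\{X: R(|X|)<\infty\}$, for a rearrangement invariant Banach function norm $R$ on nonnegative measurable functions, i.e. $R:\mathcal{M}^+\to[0,\infty]$ with $R(X)=0\iff X=0$, positive homogeneity, subadditivity, monotonicity, the Fatou property, $R(\chi_E)<\infty$ and $\int_EX\,d\mu\le c_ER(X)$ for constants $c_E$, normalisation $R(\chi_\Omega)=1$, and $R(X)=R(Y)$ for equimeasurable $X,Y$. Its fundamental function is $t\mapsto R(\chi_E)$ with $\mu(E)=t$. Two norms are equivalent if they define the same space and are bounded by constant multiples of each other on it. *)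

theory Defs
  imports "HOL-Analysis.Analysis"
begin

definition Omega :: "real measure" where
  "Omega = lebesgue_on {0..1}"

definition Mplus :: "(real \<Rightarrow> real) set" where
  "Mplus = {X. X \<in> borel_measurable Omega \<and> (\<forall>x. 0 \<le> X x)}"

definition ri_bfn :: "((real \<Rightarrow> real) \<Rightarrow> ennreal) \<Rightarrow> bool" where
  "ri_bfn R \<longleftrightarrow>
     (\<forall>X\<in>Mplus. R X = 0 \<longleftrightarrow> (AE x in Omega. X x = 0)) \<and>
     (\<forall>X\<in>Mplus. \<forall>c::real. 0 \<le> c \<longrightarrow> R (\<lambda>x. c * X x) = ennreal c * R X) \<and>
     (\<forall>X\<in>Mplus. \<forall>Y\<in>Mplus. R (\<lambda>x. X x + Y x) \<le> R X + R Y) \<and>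
     (\<forall>X\<in>Mplus. \<forall>Y\<in>Mplus. (AE x in Omega. X x \<le> Y x) \<longrightarrow> R X \<le> R Y) \<and>
     (\<forall>F X. (\<forall>n. F n \<in> Mplus) \<and> X \<in> Mplus \<and>
        (AE x in Omega. incseq (\<lambda>n. F n x) \<and> (\<lambda>n. F n x) \<longlonglongrightarrow> X x)
        \<longrightarrow> (\<lambda>n. R (F n)) \<longlonglongrightarrow> R X) \<and>
     (\<forall>E\<in>sets Omega. R (indicator E) < \<infinity>) \<and>
     (\<forall>E\<in>sets Omega. \<exists>c::real. \<forall>X\<in>Mplus.
        (\<integral>\<^sup>+x\<in>E. ennreal (X x) \<partial>Omega) \<le> ennreal c * R X) \<and>
     R (indicator (space Omega)) = 1 \<and>
     (\<forall>X\<in>Mplus. \<forall>Y\<in>Mplus.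
        (\<forall>t. emeasure Omega {x\<in>space Omega. t < X x} = emeasure Omega {x\<in>space Omega. t < Y x})
        \<longrightarrow> R X = R Y)"

definition ri_space :: "((real \<Rightarrow> real) \<Rightarrow> ennreal) \<Rightarrow> (real \<Rightarrow> real) set" where
  "ri_space R = {X. X \<in> borel_measurable Omega \<and> R (\<lambda>x. \<bar>X x\<bar>) < \<infinity>}"

definition ri_equiv :: "((real \<Rightarrow> real) \<Rightarrow> ennreal) \<Rightarrow> ((real \<Rightarrow> real) \<Rightarrow> ennreal) \<Rightarrow> bool" where
  "ri_equiv R1 R2 \<longleftrightarrow> ri_space R1 = ri_space R2 \<and>
     (\<exists>c1 c2::real. 0 < c1 \<and> 0 < c2 \<and> (\<forall>X\<in>ri_space R1.
        R1 (\<lambda>x. \<bar>X x\<bar>) \<le> ennreal c1 * R2 (\<lambda>x. \<bar>X x\<bar>) \<and>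
        R2 (\<lambda>x. \<bar>X x\<bar>) \<le> ennreal c2 * R1 (\<lambda>x. \<bar>X x\<bar>)))"

definition fundamental_function :: "((real \<Rightarrow> real) \<Rightarrow> ennreal) \<Rightarrow> (real \<Rightarrow> real) \<Rightarrow> bool" where
  "fundamental_function R \<phi> \<longleftrightarrow>
     (\<forall>E\<in>sets Omega. R (indicator E) = ennreal (\<phi> (measure Omega E)))"

definition L1norm :: "(real \<Rightarrow> real) \<Rightarrow> ennreal" where
  "L1norm X = (\<integral>\<^sup>+x. ennreal (X x) \<partial>Omega)"

end

theory Submission
  imports Defs
begin

text \<open>
  The Banach function norm axiom for E = Omega gives \<open>\<integral> X \<le> c R(X)\<close>, so L1 is dominated by
  every ri norm. Conversely, a concave \<open>\<phi>\<close> with \<open>\<phi> 0 = 0\<close> has \<open>\<phi> t / t\<close> decreasing, whence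
  \<open>\<phi> t \<le> \<phi>'(0) t\<close> and \<open>R(\<chi>\<^sub>E) \<le> \<phi>'(0) \<mu>(E)\<close>. Homogeneity and subadditivity carry this bound
  from indicators to simple functions, and the Fatou property to all \<open>X \<ge> 0\<close>, so
  \<open>R(X) \<le> \<phi>'(0) \<integral> X\<close>. Every such norm is therefore equivalent to L1, hence to every other.
\<close>

lemma concave_le_right_derivative_at_0:
  fixes \<phi> :: "real \<Rightarrow> real"
  assumes conc: "concave_on {0..b} \<phi>" and zero: "\<phi> 0 = 0"
    and deriv: "(\<phi> has_real_derivative D) (at 0 within {0..b})"
    and t: "0 \<le> t" "t \<le> b"
  shows "\<phi> t \<le> D * t"
proof (cases "t = 0")
  case True
  then show ?thesis using zero by simp
next
  case False
  with t have t: "0 < t" "t \<le> b" by auto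
  have lim: "((\<lambda>s. \<phi> s / s) \<longlongrightarrow> D) (at_right 0)"
    using deriv t unfolding has_field_derivative_iff by (simp add: zero at_within_Icc_at_right)
  have "eventually (\<lambda>s. \<phi> t / t \<le> \<phi> s / s) (at_right 0)"
    unfolding eventually_at_right_field
  proof (intro exI[of _ t] conjI allI impI)
    fix s :: real assume s: "0 < s" "s < t"
    have "(1 - s/t) * \<phi> 0 + (s/t) * \<phi> t \<le> \<phi> ((1 - s/t) *\<^sub>R 0 + (s/t) *\<^sub>R t)"
      using concave_onD[OF conc, of "s/t" 0 t] s t by simp
    then have "(s/t) * \<phi> t \<le> \<phi> s" using zero t by simp
    then show "\<phi> t / t \<le> \<phi> s / s" using s t by (simp add: field_simps)
  qed (use t in simp)
  then have "\<phi> t / t \<le> D"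
    by (intro tendsto_lowerbound[OF lim]) (simp_all add: trivial_limit_at_right_real)
  then show ?thesis using t by (simp add: field_simps)
qed

lemma finite_measure_Omega: "finite_measure Omega"
  unfolding Omega_def by (intro finite_measure_lebesgue_on) auto

definition ri_dominated :: "((real \<Rightarrow> real) \<Rightarrow> ennreal) \<Rightarrow> ((real \<Rightarrow> real) \<Rightarrow> ennreal) \<Rightarrow> bool" where
  "ri_dominated R S \<longleftrightarrow> (\<exists>c>0. \<forall>X\<in>Mplus. R X \<le> ennreal c * S X)"

lemma ri_dominated_trans:
  assumes "ri_dominated R S" "ri_dominated S T"
  shows "ri_dominated R T"
proof -
  obtain a where a: "a > 0" "\<And>X. X \<in> Mplus \<Longrightarrow> R X \<le> ennreal a * S X"
    using assms(1) unfolding ri_dominated_def by auto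
  obtain b where b: "b > 0" "\<And>X. X \<in> Mplus \<Longrightarrow> S X \<le> ennreal b * T X"
    using assms(2) unfolding ri_dominated_def by auto
  have "R X \<le> ennreal (a * b) * T X" if X: "X \<in> Mplus" for X
  proof -
    have "R X \<le> ennreal a * S X" using a X by auto
    also have "\<dots> \<le> ennreal a * (ennreal b * T X)" using b X by (auto intro: mult_left_mono)
    finally show ?thesis using a b by (simp add: ennreal_mult mult.assoc)
  qed
  then show ?thesis unfolding ri_dominated_def using a b by (intro exI[of _ "a * b"]) auto
qed

lemma abs_in_Mplus: "X \<in> borel_measurable Omega \<Longrightarrow> (\<lambda>x. \<bar>X x\<bar>) \<in> Mplus"
  unfolding Mplus_def by auto

lemma ri_space_subset_if_dominated:
  assumes "ri_dominated R S"
  shows "ri_space S \<subseteq> ri_space R"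
proof
  obtain a where a: "\<And>X. X \<in> Mplus \<Longrightarrow> R X \<le> ennreal a * S X"
    using assms unfolding ri_dominated_def by auto
  fix X assume "X \<in> ri_space S"
  then have X: "X \<in> borel_measurable Omega" "S (\<lambda>x. \<bar>X x\<bar>) < \<infinity>"
    unfolding ri_space_def by auto
  have "R (\<lambda>x. \<bar>X x\<bar>) \<le> ennreal a * S (\<lambda>x. \<bar>X x\<bar>)" using a abs_in_Mplus[OF X(1)] .
  also have "\<dots> < \<infinity>" using X(2) by (simp add: ennreal_mult_less_top)
  finally show "X \<in> ri_space R" using X(1) unfolding ri_space_def by auto
qed

lemma ri_equiv_if_dominated:
  assumes RS: "ri_dominated R S" and SR: "ri_dominated S R"
  shows "ri_equiv R S"
proof -
  obtain a where a: "a > 0" "\<And>X. X \<in> Mplus \<Longrightarrow> R X \<le> ennreal a * S X"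
    using RS unfolding ri_dominated_def by auto
  obtain b where b: "b > 0" "\<And>X. X \<in> Mplus \<Longrightarrow> S X \<le> ennreal b * R X"
    using SR unfolding ri_dominated_def by auto
  have "ri_space R = ri_space S"
    using ri_space_subset_if_dominated[OF RS] ri_space_subset_if_dominated[OF SR] by blast
  then show ?thesis unfolding ri_equiv_def
    using a b abs_in_Mplus unfolding ri_space_def by (intro conjI exI[of _ a] exI[of _ b]) auto
qed

lemma L1norm_dominated:
  assumes "ri_bfn R"
  shows "ri_dominated L1norm R"
proof -
  obtain c :: real where c: "\<And>X. X \<in> Mplus \<Longrightarrow>
      (\<integral>\<^sup>+x\<in>space Omega. ennreal (X x) \<partial>Omega) \<le> ennreal c * R X"
    using assms sets.top[of Omega] unfolding ri_bfn_def by blast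
  have "L1norm X \<le> ennreal (max c 1) * R X" if X: "X \<in> Mplus" for X
  proof -
    have "L1norm X = (\<integral>\<^sup>+x\<in>space Omega. ennreal (X x) \<partial>Omega)"
      unfolding L1norm_def by (intro nn_integral_cong) auto
    also have "\<dots> \<le> ennreal c * R X" using c X .
    also have "\<dots> \<le> ennreal (max c 1) * R X" by (intro mult_right_mono) auto
    finally show ?thesis .
  qed
  then show ?thesis unfolding ri_dominated_def by (intro exI[of _ "max c 1"]) auto
qed

lemma ri_le_L1norm_if_indicator_le:
  assumes R: "ri_bfn R"
    and indicator_le: "\<And>A. A \<in> sets Omega \<Longrightarrow> R (indicator A) \<le> C * emeasure Omega A"
    and X: "X \<in> Mplus"
  shows "R X \<le> C * L1norm X"
proof -
  have hom: "\<And>X c. X \<in> Mplus \<Longrightarrow> 0 \<le> c \<Longrightarrow> R (\<lambda>x. c * X x) = ennreal c * R X"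
    and sub: "\<And>X Y. X \<in> Mplus \<Longrightarrow> Y \<in> Mplus \<Longrightarrow> R (\<lambda>x. X x + Y x) \<le> R X + R Y"
    and fatou: "\<And>F X. (\<forall>n. F n \<in> Mplus) \<and> X \<in> Mplus \<and>
        (AE x in Omega. incseq (\<lambda>n. F n x) \<and> (\<lambda>n. F n x) \<longlonglongrightarrow> X x)
        \<Longrightarrow> (\<lambda>n. R (F n)) \<longlonglongrightarrow> R X"
    using R unfolding ri_bfn_def by blast+
  from X have "X \<in> borel_measurable Omega" "\<And>x. 0 \<le> X x" unfolding Mplus_def by auto
  then show ?thesis unfolding L1norm_def
  proof (induction X rule: borel_measurable_induct_real)
    case (set A)
    then show ?case using indicator_le by (simp add: ennreal_indicator)
  next
    case (mult u c)
    have "R (\<lambda>x. c * u x) = ennreal c * R u" using mult hom unfolding Mplus_def by auto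
    also have "\<dots> \<le> ennreal c * (C * (\<integral>\<^sup>+x. ennreal (u x) \<partial>Omega))"
      using mult by (intro mult_left_mono) auto
    also have "\<dots> = C * (\<integral>\<^sup>+x. ennreal (c * u x) \<partial>Omega)"
      using mult by (simp add: nn_integral_cmult ennreal_mult mult.left_commute)
    finally show ?case .
  next
    case (add u v)
    have "R (\<lambda>x. v x + u x) \<le> R v + R u" using add sub unfolding Mplus_def by auto
    also have "\<dots> \<le> C * (\<integral>\<^sup>+x. ennreal (v x) \<partial>Omega) + C * (\<integral>\<^sup>+x. ennreal (u x) \<partial>Omega)"
      using add by (intro add_mono) auto
    also have "\<dots> = C * (\<integral>\<^sup>+x. ennreal (v x + u x) \<partial>Omega)"
      using add by (simp add: nn_integral_add distrib_left ennreal_plus)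
    finally show ?case .
  next
    case (seq U)
    have U_le_X: "U n x \<le> X x" if "x \<in> space Omega" for n x
      using seq that by (intro incseq_le) (auto simp: incseq_def le_fun_def)
    have "(\<lambda>n. R (U n)) \<longlonglongrightarrow> R X"
      using seq X by (intro fatou) (auto simp: Mplus_def incseq_def le_fun_def)
    moreover have "R (U n) \<le> C * (\<integral>\<^sup>+x. ennreal (X x) \<partial>Omega)" for n
    proof -
      have "R (U n) \<le> C * (\<integral>\<^sup>+x. ennreal (U n x) \<partial>Omega)" using seq by auto
      also have "\<dots> \<le> C * (\<integral>\<^sup>+x. ennreal (X x) \<partial>Omega)"
        by (intro mult_left_mono nn_integral_mono ennreal_leI U_le_X) auto
      finally show ?thesis .
    qed
    ultimately show ?case by (intro LIMSEQ_le_const2) auto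
  qed
qed

lemma ri_dominated_L1norm_if_fundamental_le_linear:
  assumes R: "ri_bfn R" and fund: "fundamental_function R \<phi>"
    and C: "C > 0" and \<phi>_le: "\<And>t. 0 \<le> t \<Longrightarrow> t \<le> 1 \<Longrightarrow> \<phi> t \<le> C * t"
  shows "ri_dominated R L1norm"
proof -
  interpret finite_measure Omega by (rule finite_measure_Omega)
  have "R (indicator A) \<le> ennreal C * emeasure Omega A" if A: "A \<in> sets Omega" for A
  proof -
    have "R (indicator A) = ennreal (\<phi> (measure Omega A))"
      using fund A unfolding fundamental_function_def by auto
    also have "\<dots> \<le> ennreal (C * measure Omega A)"
      using bounded_measure[of A] by (intro ennreal_leI \<phi>_le) (auto simp: Omega_def measure_restrict_space)
    also have "\<dots> = ennreal C * emeasure Omega A"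
      using C by (simp add: ennreal_mult emeasure_eq_measure)
    finally show ?thesis .
  qed
  then show ?thesis unfolding ri_dominated_def
    using C ri_le_L1norm_if_indicator_le[OF R] by (intro exI[of _ C]) auto
qed

lemma ri_dominated_L1norm_if_concave_differentiable:
  assumes R: "ri_bfn R" and fund: "fundamental_function R \<phi>"
    and conc: "concave_on {0..1} \<phi>" and zero: "\<phi> 0 = 0"
    and deriv: "(\<phi> has_real_derivative D) (at 0 within {0..1})"
  shows "ri_dominated R L1norm"
proof (rule ri_dominated_L1norm_if_fundamental_le_linear[OF R fund])
  fix t :: real assume t: "0 \<le> t" "t \<le> 1"
  have "\<phi> t \<le> D * t" using concave_le_right_derivative_at_0[OF conc zero deriv t] .
  also have "\<dots> \<le> max D 1 * t" using t by (intro mult_right_mono) auto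
  finally show "\<phi> t \<le> max D 1 * t" .
qed simp

theorem theorem28:
  fixes R1 R2 :: "(real \<Rightarrow> real) \<Rightarrow> ennreal" and \<phi>1 \<phi>2 :: "real \<Rightarrow> real"
  assumes "ri_bfn R1" and "ri_bfn R2"
    and "fundamental_function R1 \<phi>1" and "fundamental_function R2 \<phi>2"
    and "concave_on {0..1} \<phi>1" and "concave_on {0..1} \<phi>2"
    and "\<phi>1 ` {0..1} \<subseteq> {0..1}" and "\<phi>2 ` {0..1} \<subseteq> {0..1}"
    and "\<phi>1 0 = 0" and "\<phi>1 1 = 1" and "\<phi>2 0 = 0" and "\<phi>2 1 = 1"
    and "continuous (at 0 within {0..1}) \<phi>1" and "continuous (at 0 within {0..1}) \<phi>2"
    and "\<exists>D. (\<phi>1 has_real_derivative D) (at 0 within {0..1})"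
    and "\<exists>D. (\<phi>2 has_real_derivative D) (at 0 within {0..1})"
  shows "ri_equiv R1 R2 \<and> ri_equiv R1 L1norm"
proof -
  have R1_L1: "ri_dominated R1 L1norm"
    using assms ri_dominated_L1norm_if_concave_differentiable by metis
  have R2_L1: "ri_dominated R2 L1norm"
    using assms ri_dominated_L1norm_if_concave_differentiable by metis
  have L1_R1: "ri_dominated L1norm R1" and L1_R2: "ri_dominated L1norm R2"
    using assms L1norm_dominated by auto
  show ?thesis
    using ri_equiv_if_dominated ri_dominated_trans R1_L1 R2_L1 L1_R1 L1_R2 by blast
qed

end
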